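(* For any finite simple graph $X$ and any update sequence $\pi\in S_X$, the increasing extended threshold SDS map $\mathbf{F}^\uparrow_\pi$ has no periodic orbit of length $\ge 2$, and the increasing extended threshold GCA map $\mathbf{F}^\uparrow$ has no periodic orbit of length $\ge 3$.
   Context: Let $X$ be a finite simple graph with vertices $1,\dots,n$; $d(v)$ is the degree of $v$ and $n[v]$ the closed neighborhood of $v$. An extended vertex state is $s_v=(x_v,k_v)\in\{0,1\}\times\{1,\dots,d(v)+1\}$, and $\mathcal{S}$ is the product of these sets. Let $\sigma(x[v])=|\{u\in n[v]:x_u=1\}|$. The increasing vertex function maps $(x_v,k_v)$ to $(x_v',k_v')$ with $x_v'=1$ iff $\sigma(x[v])\ge k_v$, and $k_v'=k_v+1$ if $x_v=0$ and $\sigma(x[v])\ge k_v$, else $k_v'=k_v$. The local map $F^\uparrow_v$ updates only coordinate $v$ by this rule. For a permutation $\pi=(\pi_1,\dots,\pi_n)$ of the vertices, $\mathbf{F}^\uparrow_\pi=F^\uparrow_{\pi_n}\circ\cdots\circ F^\uparrow_{\pi_1}$; $\mathbf{F}^\uparrow$ applies the vertex function at all vertices simultaneously. A periodic orbit of length $m$ is a cycle of $m$ distinct states under iteration of the map. *)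

theory Defs
  imports Main
begin

definition simple_graph :: "nat \<Rightarrow> (nat \<Rightarrow> nat \<Rightarrow> bool) \<Rightarrow> bool" where
  "simple_graph n E \<longleftrightarrow>
     (\<forall>u v. E u v \<longrightarrow> u \<in> {1..n} \<and> v \<in> {1..n}) \<and>
     (\<forall>u v. E u v \<longrightarrow> E v u) \<and> (\<forall>v. \<not> E v v)"

definition degree :: "nat \<Rightarrow> (nat \<Rightarrow> nat \<Rightarrow> bool) \<Rightarrow> nat \<Rightarrow> nat" where
  "degree n E v = card {u \<in> {1..n}. E v u}"

definition closed_nbhd :: "nat \<Rightarrow> (nat \<Rightarrow> nat \<Rightarrow> bool) \<Rightarrow> nat \<Rightarrow> nat set" where
  "closed_nbhd n E v = insert v {u \<in> {1..n}. E v u}"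

text \<open>States are functions on nat; outside {1..n} they are fixed to (0,1)
  so that states correspond bijectively to elements of the product set.\<close>
type_synonym state = "nat \<Rightarrow> nat \<times> nat"

definition ext_states :: "nat \<Rightarrow> (nat \<Rightarrow> nat \<Rightarrow> bool) \<Rightarrow> state set" where
  "ext_states n E = {s. (\<forall>v\<in>{1..n}. fst (s v) \<in> {0,1} \<and> snd (s v) \<in> {1..degree n E v + 1})
                        \<and> (\<forall>v. v \<notin> {1..n} \<longrightarrow> s v = (0,1))}"

definition sigma :: "nat \<Rightarrow> (nat \<Rightarrow> nat \<Rightarrow> bool) \<Rightarrow> state \<Rightarrow> nat \<Rightarrow> nat" where
  "sigma n E s v = card {u \<in> closed_nbhd n E v. fst (s u) = 1}"

definition inc_vertex_fun :: "nat \<Rightarrow> (nat \<Rightarrow> nat \<Rightarrow> bool) \<Rightarrow> state \<Rightarrow> nat \<Rightarrow> nat \<times> nat" where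
  "inc_vertex_fun n E s v =
     (let x = fst (s v); k = snd (s v); sg = sigma n E s v in
      (if sg \<ge> k then 1 else 0, if x = 0 \<and> sg \<ge> k then k + 1 else k))"

definition local_map :: "nat \<Rightarrow> (nat \<Rightarrow> nat \<Rightarrow> bool) \<Rightarrow> nat \<Rightarrow> state \<Rightarrow> state" where
  "local_map n E v s = s(v := inc_vertex_fun n E s v)"

text \<open>SDS map F_\<pi> = F_{\<pi>_n} \<circ> ... \<circ> F_{\<pi>_1}; \<pi> is a list, applied left to right\<close>
definition sds_map :: "nat \<Rightarrow> (nat \<Rightarrow> nat \<Rightarrow> bool) \<Rightarrow> nat list \<Rightarrow> state \<Rightarrow> state" where
  "sds_map n E \<pi> s = fold (local_map n E) \<pi> s"

definition gca_map :: "nat \<Rightarrow> (nat \<Rightarrow> nat \<Rightarrow> bool) \<Rightarrow> state \<Rightarrow> state" where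
  "gca_map n E s = (\<lambda>v. if v \<in> {1..n} then inc_vertex_fun n E s v else s v)"

definition is_perm_seq :: "nat \<Rightarrow> nat list \<Rightarrow> bool" where
  "is_perm_seq n \<pi> \<longleftrightarrow> distinct \<pi> \<and> set \<pi> = {1..n}"

definition periodic_orbit :: "('a \<Rightarrow> 'a) \<Rightarrow> 'a \<Rightarrow> nat \<Rightarrow> bool" where
  "periodic_orbit f s m \<longleftrightarrow> m \<ge> 1 \<and> (f ^^ m) s = s \<and> inj_on (\<lambda>i. (f ^^ i) s) {0..<m}"

end

theory Submission
  imports Defs
begin

text \<open>Give a vertex state (x, k) the weight 2k + [x = 0]. The increasing vertex function
  either leaves the state unchanged or raises its weight by one, since (0,k) goes to (1,k+1)
  and (1,k) goes to (0,k). Hence every local map, every SDS map and the GCA map raise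
  all weights weakly and are the identity wherever no weight moves. Along a periodic orbit
  the weights of s are bounded by those of f s and, going once around, by themselves, so
  f s = s: only fixed points are periodic. For the GCA this is stronger than claimed.\<close>

definition weight :: "nat \<times> nat \<Rightarrow> nat" where
  "weight p = 2 * snd p + (if fst p = 0 then 1 else 0)"

text \<open>Needed for rigidity: a junk state (2, k) can move to (1, k) at equal weight.\<close>

definition binary_state :: "state \<Rightarrow> bool" where
  "binary_state s \<longleftrightarrow> (\<forall>u. fst (s u) \<le> 1)"

definition weight_progressive ::
    "(('a \<Rightarrow> 'b) \<Rightarrow> bool) \<Rightarrow> ('b \<Rightarrow> 'c::order) \<Rightarrow> (('a \<Rightarrow> 'b) \<Rightarrow> 'a \<Rightarrow> 'b) \<Rightarrow> bool" where
  "weight_progressive P w f \<longleftrightarrow>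
     (\<forall>s. P s \<longrightarrow> P (f s)) \<and>
     (\<forall>s u. P s \<longrightarrow> w (s u) \<le> w (f s u)) \<and>
     (\<forall>s. P s \<longrightarrow> (\<forall>u. w (f s u) = w (s u)) \<longrightarrow> f s = s)"

lemma weight_progressive_id: "weight_progressive P w id"
  unfolding weight_progressive_def by simp

lemma weight_progressive_comp:
  assumes f: "weight_progressive P w f" and g: "weight_progressive P w g"
  shows "weight_progressive P w (g \<circ> f)"
proof -
  have inv_f: "P (f s)" and up_f: "w (s u) \<le> w (f s u)"
    and rigid_f: "(\<forall>u. w (f s u) = w (s u)) \<Longrightarrow> f s = s" if "P s" for s u
    using f that unfolding weight_progressive_def by blast+
  have inv_g: "P (g s)" and up_g: "w (s u) \<le> w (g s u)"
    and rigid_g: "(\<forall>u. w (g s u) = w (s u)) \<Longrightarrow> g s = s" if "P s" for s u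
    using g that unfolding weight_progressive_def by blast+
  have "(g \<circ> f) s = s" if s: "P s" and same: "\<forall>u. w (g (f s) u) = w (s u)" for s
  proof -
    have "w (f s u) = w (s u)" and "w (g (f s) u) = w (f s u)" for u
      using up_f[OF s, of u] up_g[OF inv_f[OF s], of u] same
      by (metis order.antisym)+
    then show ?thesis
      using rigid_f[OF s] rigid_g[OF inv_f[OF s]] by simp
  qed
  then show ?thesis
    unfolding weight_progressive_def using inv_f inv_g up_f up_g
    by (metis comp_apply order.trans)
qed

lemma weight_progressive_fold:
  assumes "\<And>v. v \<in> set vs \<Longrightarrow> weight_progressive P w (h v)"
  shows "weight_progressive P w (fold h vs)"
  using assms
proof (induction vs)
  case Nil
  then show ?case using weight_progressive_id by (simp add: id_def)
next
  case (Cons v vs)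
  then have "weight_progressive P w (fold h vs \<circ> h v)"
    by (intro weight_progressive_comp) simp_all
  then show ?case by (simp add: comp_def)
qed

lemma weight_mono_funpow:
  assumes "weight_progressive P w f" and "P s"
  shows "w (f s u) \<le> w ((f ^^ Suc i) s u)"
proof (induction i)
  case 0
  then show ?case by simp
next
  case (Suc i)
  have "P ((f ^^ j) s)" for j
    using assms by (induction j) (auto simp: weight_progressive_def)
  then have "w ((f ^^ Suc i) s u) \<le> w (f ((f ^^ Suc i) s) u)"
    using assms(1) unfolding weight_progressive_def by blast
  with Suc show ?case by simp
qed

lemma periodic_orbit_fixed_point:
  assumes "periodic_orbit f s m" and "f s = s"
  shows "m = 1"
proof (rule ccontr)
  assume "m \<noteq> 1"
  with assms(1) have range: "(0::nat) \<in> {0..<m}" "(1::nat) \<in> {0..<m}"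
    and inj: "inj_on (\<lambda>i. (f ^^ i) s) {0..<m}"
    unfolding periodic_orbit_def by auto
  have "(f ^^ 1) s = (f ^^ 0) s" using assms(2) by simp
  then have "(1::nat) = 0" using inj_onD[OF inj _ range(2,1)] by simp
  then show False by simp
qed

lemma periodic_orbit_weight_progressive:
  assumes f: "weight_progressive P w f" and "P s" and orbit: "periodic_orbit f s m"
  shows "m = 1"
proof -
  obtain i where return: "(f ^^ Suc i) s = s"
    using orbit unfolding periodic_orbit_def by (cases m) auto
  have "w (s u) \<le> w (f s u)" for u
    using f \<open>P s\<close> unfolding weight_progressive_def by blast
  moreover have "w (f s u) \<le> w (s u)" for u
  proof -
    have "w (f s u) \<le> w ((f ^^ Suc i) s u)"
      using f \<open>P s\<close> by (rule weight_mono_funpow[where w = w and f = f and s = s])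
    then show ?thesis unfolding return .
  qed
  ultimately have "w (f s u) = w (s u)" for u
    by (blast intro: order.antisym)
  then have "f s = s"
    using f \<open>P s\<close> unfolding weight_progressive_def by blast
  with orbit show ?thesis by (rule periodic_orbit_fixed_point)
qed

lemma inc_vertex_fun_weight_mono: "weight (s v) \<le> weight (inc_vertex_fun n E s v)"
  unfolding inc_vertex_fun_def Let_def weight_def by auto

lemma fst_inc_vertex_fun_le_1: "fst (inc_vertex_fun n E s v) \<le> 1"
  unfolding inc_vertex_fun_def Let_def by auto

lemma inc_vertex_fun_weight_eq:
  assumes "fst (s v) \<le> 1" and "weight (inc_vertex_fun n E s v) = weight (s v)"
  shows "inc_vertex_fun n E s v = s v"
  using assms unfolding inc_vertex_fun_def Let_def weight_def
  by (cases "s v") (auto split: if_splits)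

lemma weight_progressive_local_map: "weight_progressive binary_state weight (local_map n E v)"
  unfolding weight_progressive_def binary_state_def
proof (intro conjI allI impI)
  fix s :: state and u
  show "weight (s u) \<le> weight (local_map n E v s u)"
    unfolding local_map_def using inc_vertex_fun_weight_mono by simp
next
  fix s :: state and u assume "\<forall>u. fst (s u) \<le> 1"
  then show "fst (local_map n E v s u) \<le> 1"
    unfolding local_map_def using fst_inc_vertex_fun_le_1 by simp
next
  fix s :: state assume "\<forall>u. fst (s u) \<le> 1" and "\<forall>u. weight (local_map n E v s u) = weight (s u)"
  then have "inc_vertex_fun n E s v = s v"
    unfolding local_map_def by (metis fun_upd_same inc_vertex_fun_weight_eq)
  then show "local_map n E v s = s"
    unfolding local_map_def by simp
qed

lemma weight_progressive_sds_map: "weight_progressive binary_state weight (sds_map n E \<pi>)"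
  using weight_progressive_fold[OF weight_progressive_local_map]
  by (simp add: sds_map_def[abs_def])

lemma weight_progressive_gca_map: "weight_progressive binary_state weight (gca_map n E)"
  unfolding weight_progressive_def binary_state_def
proof (intro conjI allI impI)
  fix s :: state and u
  show "weight (s u) \<le> weight (gca_map n E s u)"
    unfolding gca_map_def using inc_vertex_fun_weight_mono by simp
next
  fix s :: state and u assume "\<forall>u. fst (s u) \<le> 1"
  then show "fst (gca_map n E s u) \<le> 1"
    unfolding gca_map_def using fst_inc_vertex_fun_le_1 by simp
next
  fix s :: state assume "\<forall>u. fst (s u) \<le> 1" and "\<forall>u. weight (gca_map n E s u) = weight (s u)"
  then show "gca_map n E s = s"
    unfolding gca_map_def using inc_vertex_fun_weight_eq by (auto split: if_splits)
qed

lemma ext_states_binary: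
  assumes "s \<in> ext_states n E"
  shows "binary_state s"
  unfolding binary_state_def
proof
  fix u
  show "fst (s u) \<le> 1"
  proof (cases "u \<in> {1..n}")
    case True
    then have "fst (s u) \<in> {0, 1}" using assms unfolding ext_states_def by blast
    then show ?thesis by auto
  next
    case False
    then have "s u = (0, 1)" using assms unfolding ext_states_def by blast
    then show ?thesis by simp
  qed
qed

theorem proposition3p3:
  fixes n :: nat and E :: "nat \<Rightarrow> nat \<Rightarrow> bool"
  assumes "simple_graph n E"
  shows "(\<forall>\<pi> s m. is_perm_seq n \<pi> \<and> s \<in> ext_states n E \<and> periodic_orbit (sds_map n E \<pi>) s m
            \<longrightarrow> m < 2)
       \<and> (\<forall>s m. s \<in> ext_states n E \<and> periodic_orbit (gca_map n E) s m \<longrightarrow> m < 3)"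
proof (intro conjI allI impI)
  fix \<pi> s m
  assume "is_perm_seq n \<pi> \<and> s \<in> ext_states n E \<and> periodic_orbit (sds_map n E \<pi>) s m"
  then have "m = 1"
    by (metis periodic_orbit_weight_progressive weight_progressive_sds_map ext_states_binary)
  then show "m < 2" by simp
next
  fix s m
  assume "s \<in> ext_states n E \<and> periodic_orbit (gca_map n E) s m"
  then have "m = 1"
    by (metis periodic_orbit_weight_progressive weight_progressive_gca_map ext_states_binary)
  then show "m < 3" by simp
qed

end
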